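(* In the local model, let $p$ be the node ($x=y=0$) of a fibre over a point $b_0$ with $t(b_0)=0$. The morphism $$\sigma=((-1)^m\sigma^x_m,\dots,-\sigma^x_1,(-1)^m\sigma^y_m,\dots,-\sigma^y_1,\pi^{(m)}):U^{(m)}_B\to\mathbb A^{2m}\times B$$ is a closed embedding in a neighbourhood of the cycle $mp$. (Equivalently: every $\mathfrak S_m$-invariant polynomial in $x_1,\dots,x_m,y_1,\dots,y_m$ is, modulo the relations $x_iy_i=t$, a polynomial in the $\sigma^x_i,\sigma^y_j$ and $t$.)
   Context: Local model: $B$ is an irreducible base with a regular function $t$, and $U\subset\mathbb A^2_{x,y}\times B$ is the family of curves $\{xy=t\}$ over $B$. Thus $U^m_B\subset\mathbb A^{2m}\times B$ is given by $x_1y_1=\dots=x_my_m=t$, $U^{(m)}_B=U^m_B/\mathfrak S_m$ is the relative symmetric product with structure map $\pi^{(m)}:U^{(m)}_B\to B$. $\sigma^x_i$ and $\sigma^y_i$ ($0\le i\le m$, $\sigma_0=1$) denote the elementary symmetric functions of $x_1,\dots,x_m$ and of $y_1,\dots,y_m$, viewed as functions on $U^{(m)}_B$. *)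

theory Defs
  imports Main "HOL-Library.Poly_Mapping" "HOL-Combinatorics.Permutations"
begin

type_synonym ('v, 'a) mpoly = "('v \<Rightarrow>\<^sub>0 nat) \<Rightarrow>\<^sub>0 'a"

definition mpVar :: "'v \<Rightarrow> ('v, 'a::comm_ring_1) mpoly" where
  "mpVar v = Poly_Mapping.single (Poly_Mapping.single v 1) 1"

definition mpConst :: "'a::comm_ring_1 \<Rightarrow> ('v, 'a) mpoly" where
  "mpConst c = Poly_Mapping.single 0 c"

definition mpVars :: "('v, 'a::comm_ring_1) mpoly \<Rightarrow> 'v set" where
  "mpVars P = \<Union> (Poly_Mapping.keys ` Poly_Mapping.keys P)"

definition mpSubst :: "('w \<Rightarrow> ('v, 'a::comm_ring_1) mpoly) \<Rightarrow> ('w, 'a) mpoly \<Rightarrow> ('v, 'a) mpoly" where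
  "mpSubst f Q = (\<Sum>mon\<in>Poly_Mapping.keys Q.
      mpConst (Poly_Mapping.lookup Q mon) *
      (\<Prod>w\<in>Poly_Mapping.keys mon. f w ^ Poly_Mapping.lookup mon w))"

definition xv :: "nat \<Rightarrow> (nat \<times> bool, 'a::comm_ring_1) mpoly" where
  "xv i = mpVar (i, True)"
definition yv :: "nat \<Rightarrow> (nat \<times> bool, 'a::comm_ring_1) mpoly" where
  "yv i = mpVar (i, False)"

definition permute_mp :: "(nat \<Rightarrow> nat) \<Rightarrow> (nat \<times> bool, 'a::comm_ring_1) mpoly
    \<Rightarrow> (nat \<times> bool, 'a) mpoly" where
  "permute_mp \<pi> P = mpSubst (\<lambda>(i, b). mpVar (\<pi> i, b)) P"

text \<open>Elementary symmetric functions of x_1..x_m (b = True) or y_1..y_m (b = False),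
  indices 0..m-1.\<close>
definition esym :: "nat \<Rightarrow> bool \<Rightarrow> nat \<Rightarrow> (nat \<times> bool, 'a::comm_ring_1) mpoly" where
  "esym m b k = (\<Sum>S\<in>{S. S \<subseteq> {..<m} \<and> card S = k}. \<Prod>i\<in>S. mpVar (i, b))"

end

theory Submission
  imports Defs "HOL-Library.Product_Plus"
begin

(* Let I be the ideal generated by the relations x_i y_i - t (i < m), and call a
   polynomial f expressible if f is congruent modulo I to E(Q) for some polynomial Q in the
   variables (k, b) with 1 \<le> k \<le> m, where E substitutes the k-th elementary symmetric
   polynomial in the x's (b = True) or in the y's (b = False) for (k, b).  Since substitution is
   a ring homomorphism, expressible polynomials form a subring; it contains the constants and the
   elementary symmetric polynomials.  The proof then shows, in this order:
   (1) pure power sums  \<Sum>i x_i^a  (and likewise in the y's) are expressible, by a Newton-type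
       recursion relating them to elementary symmetric polynomials;
   (2) mixed power sums  \<Sum>i x_i^a y_i^b  are congruent modulo I to t^min(a,b) times a pure
       power sum;
   (3) the orbit sums  \<Sum>_f \<Prod>_{j<k} x_{f j}^{a_j} y_{f j}^{b_j}  over injections f are
       expressible, by induction on k using a product formula with the mixed power sums;
   (4) the symmetrisation  \<Sum>_\<pi> \<pi>.P  is a linear combination of orbit sums with k = m.
   For invariant P the symmetrisation equals m! P, and m! is invertible in the coefficients. *)

section \<open>Substitution is a ring homomorphism\<close>

lemma mpConst_add: "mpConst (a + b) = (mpConst a + mpConst b :: ('v, 'a::comm_ring_1) mpoly)"
  by (simp add: mpConst_def Poly_Mapping.single_add)

lemma mpConst_mult: "mpConst (a * b) = (mpConst a * mpConst b :: ('v, 'a::comm_ring_1) mpoly)"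
  by (simp add: mpConst_def Poly_Mapping.mult_single)

lemma mpConst_0 [simp]: "mpConst 0 = (0 :: ('v, 'a::comm_ring_1) mpoly)"
  by (simp add: mpConst_def)

lemma mpConst_1 [simp]: "mpConst 1 = (1 :: ('v, 'a::comm_ring_1) mpoly)"
  by (simp add: mpConst_def)

lemma mpConst_uminus: "mpConst (- a) = (- mpConst a :: ('v, 'a::comm_ring_1) mpoly)"
  by (simp add: mpConst_def Poly_Mapping.single_uminus)

lemma mpConst_power: "mpConst (a ^ n) = (mpConst a ^ n :: ('v, 'a::comm_ring_1) mpoly)"
  by (induct n) (simp_all add: mpConst_mult)

lemma mpConst_of_nat: "mpConst (of_nat n) = (of_nat n :: ('v, 'a::comm_ring_1) mpoly)"
  by (simp add: mpConst_def)

definition monomial_subst :: "('w \<Rightarrow> ('v, 'a::comm_ring_1) mpoly) \<Rightarrow> ('w \<Rightarrow>\<^sub>0 nat) \<Rightarrow> ('v, 'a) mpoly" where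
  "monomial_subst f mon = (\<Prod>w\<in>Poly_Mapping.keys mon. f w ^ Poly_Mapping.lookup mon w)"

lemma monomial_subst_superset:
  "finite K \<Longrightarrow> Poly_Mapping.keys mon \<subseteq> K \<Longrightarrow>
   monomial_subst f mon = (\<Prod>w\<in>K. f w ^ Poly_Mapping.lookup mon w)"
  unfolding monomial_subst_def by (rule prod.mono_neutral_left) (auto simp: in_keys_iff)

lemma monomial_subst_add: "monomial_subst f (a + b) = monomial_subst f a * monomial_subst f b"
proof -
  let ?K = "Poly_Mapping.keys a \<union> Poly_Mapping.keys b"
  have "monomial_subst f (a + b) = (\<Prod>w\<in>?K. f w ^ Poly_Mapping.lookup (a + b) w)"
    by (rule monomial_subst_superset) (use Poly_Mapping.keys_add[of a b] in auto)
  also have "\<dots> = (\<Prod>w\<in>?K. f w ^ Poly_Mapping.lookup a w * f w ^ Poly_Mapping.lookup b w)"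
    by (simp add: Poly_Mapping.lookup_add power_add)
  also have "\<dots> = monomial_subst f a * monomial_subst f b"
    by (simp add: prod.distrib monomial_subst_superset[of ?K])
  finally show ?thesis .
qed

lemma mpSubst_superset:
  "finite K \<Longrightarrow> Poly_Mapping.keys Q \<subseteq> K \<Longrightarrow>
   mpSubst f Q = (\<Sum>mon\<in>K. mpConst (Poly_Mapping.lookup Q mon) * monomial_subst f mon)"
  unfolding mpSubst_def monomial_subst_def[symmetric]
  by (rule sum.mono_neutral_left) (auto simp: in_keys_iff)

lemma mpSubst_add: "mpSubst f (P + Q) = mpSubst f P + mpSubst f Q"
proof -
  let ?K = "Poly_Mapping.keys P \<union> Poly_Mapping.keys Q"
  have "mpSubst f (P + Q) =
      (\<Sum>mon\<in>?K. mpConst (Poly_Mapping.lookup (P + Q) mon) * monomial_subst f mon)"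
    by (rule mpSubst_superset) (use Poly_Mapping.keys_add[of P Q] in auto)
  also have "\<dots> = mpSubst f P + mpSubst f Q"
    by (simp add: Poly_Mapping.lookup_add mpConst_add distrib_right sum.distrib
        mpSubst_superset[of ?K])
  finally show ?thesis .
qed

lemma mpSubst_single: "mpSubst f (Poly_Mapping.single mon c) = mpConst c * monomial_subst f mon"
  by (subst mpSubst_superset[of "{mon}"]) auto

lemma mpSubst_0 [simp]: "mpSubst f 0 = 0"
  by (simp add: mpSubst_def)

lemma mpSubst_sum: "mpSubst f (sum g I) = (\<Sum>i\<in>I. mpSubst f (g i))"
  by (induct I rule: infinite_finite_induct) (auto simp: mpSubst_add)

lemma mpoly_sum_of_terms:
  "P = (\<Sum>k\<in>Poly_Mapping.keys P. Poly_Mapping.single k (Poly_Mapping.lookup P k))"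
  by (rule poly_mapping_eqI)
    (auto simp: Poly_Mapping.lookup_sum Poly_Mapping.lookup_single when_def in_keys_iff)

lemma mpSubst_mult: "mpSubst f (P * Q) = mpSubst f P * mpSubst f Q"
proof -
  have "P * Q = (\<Sum>a\<in>Poly_Mapping.keys P. \<Sum>b\<in>Poly_Mapping.keys Q.
      Poly_Mapping.single (a + b) (Poly_Mapping.lookup P a * Poly_Mapping.lookup Q b))"
    by (subst mpoly_sum_of_terms[of P], subst mpoly_sum_of_terms[of Q])
      (simp add: sum_product Poly_Mapping.mult_single)
  then have "mpSubst f (P * Q) = (\<Sum>a\<in>Poly_Mapping.keys P. \<Sum>b\<in>Poly_Mapping.keys Q.
      (mpConst (Poly_Mapping.lookup P a) * monomial_subst f a) *
      (mpConst (Poly_Mapping.lookup Q b) * monomial_subst f b))"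
    by (simp add: mpSubst_sum mpSubst_single mpConst_mult monomial_subst_add mult_ac)
  also have "\<dots> = mpSubst f P * mpSubst f Q"
    by (simp add: mpSubst_def monomial_subst_def sum_product)
  finally show ?thesis .
qed

lemma mpSubst_const: "mpSubst f (mpConst c) = mpConst c"
  by (simp add: mpConst_def mpSubst_single monomial_subst_def)

lemma mpSubst_var: "mpSubst f (mpVar v) = f v"
  by (simp add: mpVar_def mpSubst_single monomial_subst_def)

lemma mpVars_add: "mpVars (P + Q) \<subseteq> mpVars P \<union> mpVars Q"
  unfolding mpVars_def using Poly_Mapping.keys_add[of P Q] by blast

lemma mpVars_mult: "mpVars (P * Q) \<subseteq> mpVars P \<union> mpVars Q"
proof
  fix v assume "v \<in> mpVars (P * Q)"
  then obtain mon where mon: "mon \<in> Poly_Mapping.keys (P * Q)" "v \<in> Poly_Mapping.keys mon"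
    by (auto simp: mpVars_def)
  then obtain a b where "a \<in> Poly_Mapping.keys P" "b \<in> Poly_Mapping.keys Q" "mon = a + b"
    using Poly_Mapping.keys_mult[of P Q] by blast
  then show "v \<in> mpVars P \<union> mpVars Q"
    using mon Poly_Mapping.keys_add[of a b] by (auto simp: mpVars_def)
qed

lemma mpVars_const: "mpVars (mpConst c) = {}"
  by (simp add: mpVars_def mpConst_def)

lemma mpVars_var: "mpVars (mpVar v :: ('v, 'a::comm_ring_1) mpoly) = {v}"
  by (simp add: mpVars_def mpVar_def)

section \<open>The ideal of the node relations\<close>

definition node_rel :: "'a \<Rightarrow> nat \<Rightarrow> (nat \<times> bool, 'a::comm_ring_1) mpoly" where
  "node_rel t i = xv i * yv i - mpConst t"

definition in_node_ideal :: "nat \<Rightarrow> 'a \<Rightarrow> (nat \<times> bool, 'a::comm_ring_1) mpoly \<Rightarrow> bool" where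
  "in_node_ideal m t f \<longleftrightarrow> (\<exists>h. f = (\<Sum>i<m. h i * node_rel t i))"

lemma in_node_ideal_0: "in_node_ideal m t 0"
  unfolding in_node_ideal_def by (rule exI[of _ "\<lambda>_. 0"]) simp

lemma in_node_ideal_add:
  assumes "in_node_ideal m t f" "in_node_ideal m t g"
  shows "in_node_ideal m t (f + g)"
proof -
  obtain h1 h2 where "f = (\<Sum>i<m. h1 i * node_rel t i)" "g = (\<Sum>i<m. h2 i * node_rel t i)"
    using assms by (auto simp: in_node_ideal_def)
  then show ?thesis unfolding in_node_ideal_def
    by (intro exI[of _ "\<lambda>i. h1 i + h2 i"]) (simp add: distrib_right sum.distrib)
qed

lemma in_node_ideal_mult:
  assumes "in_node_ideal m t f"
  shows "in_node_ideal m t (g * f)"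
proof -
  obtain h where "f = (\<Sum>i<m. h i * node_rel t i)"
    using assms by (auto simp: in_node_ideal_def)
  then show ?thesis unfolding in_node_ideal_def
    by (intro exI[of _ "\<lambda>i. g * h i"]) (simp add: sum_distrib_left mult.assoc)
qed

lemma in_node_ideal_generator:
  assumes "j < m"
  shows "in_node_ideal m t (g * node_rel t j)"
proof -
  have "(\<Sum>i<m. (if i = j then g else 0) * node_rel t i) = (\<Sum>i<m. if i = j then g * node_rel t i else 0)"
    by (intro sum.cong) simp_all
  then show ?thesis
    using assms unfolding in_node_ideal_def by (intro exI[of _ "\<lambda>i. if i = j then g else 0"]) simp
qed

lemma in_node_ideal_sum:
  "(\<And>i. i \<in> I \<Longrightarrow> in_node_ideal m t (f i)) \<Longrightarrow> in_node_ideal m t (sum f I)"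
  by (induct I rule: infinite_finite_induct) (auto simp: in_node_ideal_0 in_node_ideal_add)

text \<open>Modulo the node relations, x_i^a y_i^b may be replaced by t^c x_i^(a-c) y_i^(b-c)
  with c = min a b: the difference is a multiple of (x_i y_i)^c - t^c.\<close>
lemma node_reduction:
  assumes "i < m" and "c = min a b"
  shows "in_node_ideal m t (xv i ^ a * yv i ^ b - mpConst (t ^ c) * (xv i ^ (a - c) * yv i ^ (b - c)))"
proof -
  define X :: "(nat \<times> bool, 'a) mpoly" where "X = xv i * yv i"
  define T :: "(nat \<times> bool, 'a) mpoly" where "T = mpConst t"
  define A :: "(nat \<times> bool, 'a) mpoly" where "A = xv i ^ (a - c) * yv i ^ (b - c)"
  have "xv i ^ a * yv i ^ b = A * X ^ c"
    using assms(2) by (simp add: X_def A_def power_mult_distrib mult_ac flip: power_add)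
  then have "xv i ^ a * yv i ^ b - mpConst (t ^ c) * A = A * (X ^ c - T ^ c)"
    by (simp add: mpConst_power T_def algebra_simps)
  also have "X ^ c - T ^ c = (X - T) * (\<Sum>j<c. T ^ (c - Suc j) * X ^ j)"
    by (rule power_diff_sumr2)
  also have "X - T = node_rel t i"
    by (simp add: node_rel_def X_def T_def)
  finally have "xv i ^ a * yv i ^ b - mpConst (t ^ c) * A =
      (A * (\<Sum>j<c. T ^ (c - Suc j) * X ^ j)) * node_rel t i"
    by (simp add: mult_ac)
  then show ?thesis
    using in_node_ideal_generator[OF assms(1)] by (simp add: A_def)
qed

section \<open>Polynomials expressible through the elementary symmetric functions\<close>

definition sym_expressible :: "nat \<Rightarrow> 'a \<Rightarrow> (nat \<times> bool, 'a::comm_ring_1) mpoly \<Rightarrow> bool" where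
  "sym_expressible m t f \<longleftrightarrow> (\<exists>Q. mpVars Q \<subseteq> {1..m} \<times> UNIV \<and>
      in_node_ideal m t (f - mpSubst (\<lambda>(k, b). esym m b k) Q))"

lemma sym_expressible_congruent:
  assumes "in_node_ideal m t (f - g)" and "sym_expressible m t g"
  shows "sym_expressible m t f"
proof -
  obtain Q where "mpVars Q \<subseteq> {1..m} \<times> UNIV"
      "in_node_ideal m t (g - mpSubst (\<lambda>(k, b). esym m b k) Q)"
    using assms(2) by (auto simp: sym_expressible_def)
  then show ?thesis
    using in_node_ideal_add[OF assms(1)] unfolding sym_expressible_def
    by (intro exI[of _ Q]) fastforce
qed

lemma sym_expressible_const: "sym_expressible m t (mpConst c)"
  unfolding sym_expressible_def
  by (rule exI[of _ "mpConst c"]) (simp add: mpVars_const mpSubst_const in_node_ideal_0)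

lemma sym_expressible_add:
  assumes "sym_expressible m t f" "sym_expressible m t g"
  shows "sym_expressible m t (f + g)"
proof -
  obtain Q1 Q2 where Q: "mpVars Q1 \<subseteq> {1..m} \<times> UNIV" "mpVars Q2 \<subseteq> {1..m} \<times> UNIV"
    "in_node_ideal m t (f - mpSubst (\<lambda>(k, b). esym m b k) Q1)"
    "in_node_ideal m t (g - mpSubst (\<lambda>(k, b). esym m b k) Q2)"
    using assms by (auto simp: sym_expressible_def)
  show ?thesis unfolding sym_expressible_def
  proof (intro exI conjI)
    show "mpVars (Q1 + Q2) \<subseteq> {1..m} \<times> UNIV" using Q mpVars_add[of Q1 Q2] by blast
    show "in_node_ideal m t (f + g - mpSubst (\<lambda>(k, b). esym m b k) (Q1 + Q2))"
      using in_node_ideal_add[OF Q(3,4)] by (simp add: mpSubst_add algebra_simps)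
  qed
qed

lemma sym_expressible_mult:
  assumes "sym_expressible m t f" "sym_expressible m t g"
  shows "sym_expressible m t (f * g)"
proof -
  obtain Q1 Q2 where Q: "mpVars Q1 \<subseteq> {1..m} \<times> UNIV" "mpVars Q2 \<subseteq> {1..m} \<times> UNIV"
    "in_node_ideal m t (f - mpSubst (\<lambda>(k, b). esym m b k) Q1)"
    "in_node_ideal m t (g - mpSubst (\<lambda>(k, b). esym m b k) Q2)"
    using assms by (auto simp: sym_expressible_def)
  define S1 where "S1 = mpSubst (\<lambda>(k, b). esym m b k) Q1"
  define S2 where "S2 = mpSubst (\<lambda>(k, b). esym m b k) Q2"
  have "f * g - S1 * S2 = g * (f - S1) + S1 * (g - S2)"
    by (simp add: algebra_simps)
  then have "in_node_ideal m t (f * g - S1 * S2)"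
    using Q(3,4) by (simp add: in_node_ideal_add in_node_ideal_mult S1_def S2_def)
  moreover have "mpVars (Q1 * Q2) \<subseteq> {1..m} \<times> UNIV"
    using Q mpVars_mult[of Q1 Q2] by blast
  ultimately show ?thesis unfolding sym_expressible_def
    by (intro exI[of _ "Q1 * Q2"]) (simp add: mpSubst_mult S1_def S2_def)
qed

lemma sym_expressible_diff:
  assumes "sym_expressible m t f" "sym_expressible m t g"
  shows "sym_expressible m t (f - g)"
  using sym_expressible_add[OF assms(1) sym_expressible_mult[OF sym_expressible_const assms(2)],
      of "- 1"]
  by (simp add: mpConst_uminus)

lemma sym_expressible_sum:
  "(\<And>i. i \<in> I \<Longrightarrow> sym_expressible m t (f i)) \<Longrightarrow> sym_expressible m t (sum f I)"
  using sym_expressible_const[of m t 0]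
  by (induct I rule: infinite_finite_induct) (auto simp: sym_expressible_add mpConst_def)

lemma sym_expressible_of_nat: "sym_expressible m t (of_nat n)"
  using sym_expressible_const[of m t "of_nat n"] by (simp add: mpConst_of_nat)

section \<open>Elementary symmetric polynomials and pure power sums\<close>

definition ksubsets :: "nat \<Rightarrow> nat \<Rightarrow> nat set set" where
  "ksubsets m k = {S. S \<subseteq> {..<m} \<and> card S = k}"

lemma finite_ksubsets: "finite (ksubsets m k)"
  unfolding ksubsets_def by (rule finite_subset[of _ "Pow {..<m}"]) auto

lemma ksubset_finite: "S \<in> ksubsets m k \<Longrightarrow> finite S"
  unfolding ksubsets_def by (auto dest: rev_finite_subset[OF finite_lessThan])

lemma ksubsets_0: "ksubsets m 0 = {{}}"
  unfolding ksubsets_def by (auto simp: card_eq_0_iff dest: rev_finite_subset[OF finite_lessThan])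

lemma ksubsets_empty: "m < k \<Longrightarrow> ksubsets m k = {}"
  by (auto simp: ksubsets_def dest!: card_mono[OF finite_lessThan])

lemma esym_ksubsets: "esym m b k = (\<Sum>S\<in>ksubsets m k. \<Prod>j\<in>S. mpVar (j, b))"
  by (simp add: esym_def ksubsets_def)

text \<open>Each e_k is expressible: trivially for 1 \<le> k \<le> m, as a constant otherwise.\<close>
lemma sym_expressible_esym: "sym_expressible m t (esym m b k)"
proof (cases "1 \<le> k \<and> k \<le> m")
  case True
  show ?thesis unfolding sym_expressible_def
    by (rule exI[of _ "mpVar (k, b)"]) (use True in \<open>auto simp: mpVars_var mpSubst_var in_node_ideal_0\<close>)
next
  case False
  then have "esym m b k = mpConst (if k = 0 then 1 else 0)"
    by (auto simp: esym_ksubsets ksubsets_0 ksubsets_empty mpConst_def)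
  then show ?thesis using sym_expressible_const by metis
qed

text \<open>The mixed sums T(k, a) = \<Sum>_{|S| = k} \<Sum>_{i \<notin> S} z_i^a \<Prod>_{j \<in> S} z_j interpolating between
  the power sum T(0, a) and the multiple T(k, 0) = (m - k) e_k of an elementary symmetric
  polynomial; here z_i is x_i or y_i according to b.\<close>
definition esym_power_mix :: "nat \<Rightarrow> bool \<Rightarrow> nat \<Rightarrow> nat \<Rightarrow> (nat \<times> bool, 'a::comm_ring_1) mpoly" where
  "esym_power_mix m b k a =
     (\<Sum>S\<in>ksubsets m k. \<Sum>i\<in>{..<m} - S. mpVar (i, b) ^ a * (\<Prod>j\<in>S. mpVar (j, b)))"

lemma esym_power_mix_power_sum: "esym_power_mix m b 0 a = (\<Sum>i<m. mpVar (i, b) ^ a)"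
  by (simp add: esym_power_mix_def ksubsets_0)

lemma esym_power_mix_esym:
  "esym_power_mix m b k 0 = (of_nat (m - k) * esym m b k :: (nat \<times> bool, 'a::comm_ring_1) mpoly)"
proof -
  have card_compl: "card ({..<m} - S) = m - k" if "S \<in> ksubsets m k" for S
    using ksubset_finite[OF that] that by (subst card_Diff_subset) (auto simp: ksubsets_def)
  have "esym_power_mix m b k 0 = (\<Sum>S\<in>ksubsets m k. of_nat (m - k) * (\<Prod>j\<in>S. mpVar (j, b)))"
    unfolding esym_power_mix_def by (intro sum.cong) (simp_all add: card_compl)
  then show ?thesis by (simp add: esym_ksubsets sum_distrib_left)
qed

text \<open>Moving an index from outside S into S: the pairs (S, i) with i \<in> S, |S| = k + 1
  correspond bijectively to the pairs (S - {i}, i) with i \<notin> S - {i}, |S - {i}| = k.\<close>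
lemma esym_power_mix_shift:
  "(\<Sum>S\<in>ksubsets m (Suc k). \<Sum>i\<in>S. mpVar (i, b) ^ a * (\<Prod>j\<in>S. mpVar (j, b))) =
   (esym_power_mix m b k (Suc a) :: (nat \<times> bool, 'a::comm_ring_1) mpoly)"
proof -
  define z :: "nat \<Rightarrow> (nat \<times> bool, 'a) mpoly" where "z i = mpVar (i, b)" for i
  have "(\<Sum>S\<in>ksubsets m (Suc k). \<Sum>i\<in>S. z i ^ a * (\<Prod>j\<in>S. z j)) =
      (\<Sum>(S, i)\<in>Sigma (ksubsets m (Suc k)) (\<lambda>S. S). z i ^ a * (\<Prod>j\<in>S. z j))"
    by (rule sum.Sigma) (auto simp: finite_ksubsets ksubset_finite)
  also have "\<dots> = (\<Sum>(S, i)\<in>Sigma (ksubsets m k) (\<lambda>S. {..<m} - S). z i ^ Suc a * (\<Prod>j\<in>S. z j))"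
  proof (rule sum.reindex_bij_witness[of _ "\<lambda>(S, i). (insert i S, i)" "\<lambda>(S, i). (S - {i}, i)"])
    fix x assume "x \<in> Sigma (ksubsets m (Suc k)) (\<lambda>S. S)"
    then obtain S i where x: "x = (S, i)" "S \<in> ksubsets m (Suc k)" "i \<in> S" by auto
    with ksubset_finite[OF x(2)] show
      "(case case x of (S, i) \<Rightarrow> (S - {i}, i) of (S, i) \<Rightarrow> (insert i S, i)) = x"
      "(case x of (S, i) \<Rightarrow> (S - {i}, i)) \<in> Sigma (ksubsets m k) (\<lambda>S. {..<m} - S)"
      "(case case x of (S, i) \<Rightarrow> (S - {i}, i) of (S, i) \<Rightarrow> z i ^ Suc a * (\<Prod>j\<in>S. z j)) =
       (case x of (S, i) \<Rightarrow> z i ^ a * (\<Prod>j\<in>S. z j))"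
      by (auto simp: ksubsets_def prod.remove[of S i] mult_ac)
  next
    fix y assume "y \<in> Sigma (ksubsets m k) (\<lambda>S. {..<m} - S)"
    then obtain S i where y: "y = (S, i)" "S \<in> ksubsets m k" "i \<in> {..<m} - S" by auto
    with ksubset_finite[OF y(2)] show
      "(case case y of (S, i) \<Rightarrow> (insert i S, i) of (S, i) \<Rightarrow> (S - {i}, i)) = y"
      "(case y of (S, i) \<Rightarrow> (insert i S, i)) \<in> Sigma (ksubsets m (Suc k)) (\<lambda>S. S)"
      by (auto simp: ksubsets_def)
  qed
  also have "\<dots> = esym_power_mix m b k (Suc a)"
    unfolding esym_power_mix_def z_def
    by (rule sum.Sigma[symmetric]) (auto simp: finite_ksubsets)
  finally show ?thesis by (simp add: z_def)
qed

text \<open>The Newton-type recursion e_{k+1} p_a = T(k+1, a) + T(k, a+1), obtained by splitting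
  the index i of the power sum p_a according to whether it lies in S.\<close>
lemma esym_power_mix_rec:
  "esym m b (Suc k) * esym_power_mix m b 0 a =
   (esym_power_mix m b (Suc k) a + esym_power_mix m b k (Suc a) :: (nat \<times> bool, 'a::comm_ring_1) mpoly)"
proof -
  define z :: "nat \<Rightarrow> (nat \<times> bool, 'a) mpoly" where "z i = mpVar (i, b)" for i
  define zS where "zS S = (\<Prod>j\<in>S. z j)" for S
  have "esym m b (Suc k) * esym_power_mix m b 0 a =
      (\<Sum>S\<in>ksubsets m (Suc k). \<Sum>i<m. z i ^ a * zS S)"
    unfolding esym_ksubsets esym_power_mix_power_sum sum_distrib_right sum_distrib_left
    by (subst sum.swap) (simp add: z_def zS_def mult_ac)
  also have "\<dots> = (\<Sum>S\<in>ksubsets m (Suc k).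
      (\<Sum>i\<in>{..<m} - S. z i ^ a * zS S) + (\<Sum>i\<in>S. z i ^ a * zS S))"
    by (intro sum.cong refl sum.subset_diff) (auto simp: ksubsets_def)
  also have "\<dots> = esym_power_mix m b (Suc k) a + esym_power_mix m b k (Suc a)"
    using esym_power_mix_shift[where m=m and k=k and b=b and a=a]
    by (simp add: sum.distrib esym_power_mix_def z_def zS_def)
  finally show ?thesis .
qed

lemma sym_expressible_esym_power_mix: "sym_expressible m t (esym_power_mix m b k a)"
proof (induct a arbitrary: k)
  case 0
  show ?case
    by (simp add: esym_power_mix_esym sym_expressible_mult sym_expressible_of_nat sym_expressible_esym)
next
  case (Suc a)
  have "esym_power_mix m b k (Suc a) =
      (esym m b (Suc k) * esym_power_mix m b 0 a - esym_power_mix m b (Suc k) a :: (nat \<times> bool, 'a) mpoly)"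
    by (simp add: esym_power_mix_rec)
  then show ?case
    by (simp add: sym_expressible_diff sym_expressible_mult sym_expressible_esym Suc)
qed

lemma sym_expressible_power_sum: "sym_expressible m t (\<Sum>i<m. mpVar (i, b) ^ a)"
  using sym_expressible_esym_power_mix[of m t b 0 a] by (simp add: esym_power_mix_power_sum)

section \<open>Mixed power sums\<close>

definition xy_monomial :: "nat \<Rightarrow> nat \<times> nat \<Rightarrow> (nat \<times> bool, 'a::comm_ring_1) mpoly" where
  "xy_monomial i p = xv i ^ fst p * yv i ^ snd p"

lemma xy_monomial_mult: "xy_monomial i p * xy_monomial i q = xy_monomial i (p + q)"
  by (simp add: xy_monomial_def power_add mult_ac)

definition xy_power_sum :: "nat \<Rightarrow> nat \<times> nat \<Rightarrow> (nat \<times> bool, 'a::comm_ring_1) mpoly" where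
  "xy_power_sum m p = (\<Sum>i<m. xy_monomial i p)"

text \<open>Reduce by the node relations: \<Sum> x_i^a y_i^b \<equiv> t^c \<Sum> x_i^(a-c) y_i^(b-c) with c = min a b,
  and the right-hand side is a pure power sum in the x's or in the y's.\<close>
lemma sym_expressible_xy_power_sum: "sym_expressible m t (xy_power_sum m (a, b))"
proof -
  define c where "c = min a b"
  have "in_node_ideal m t (\<Sum>i<m. xv i ^ a * yv i ^ b -
      mpConst (t ^ c) * (xv i ^ (a - c) * yv i ^ (b - c)))"
    by (intro in_node_ideal_sum node_reduction) (simp_all add: c_def)
  then have congr: "in_node_ideal m t (xy_power_sum m (a, b) -
      mpConst (t ^ c) * xy_power_sum m (a - c, b - c))"
    by (simp add: xy_power_sum_def xy_monomial_def sum_distrib_left sum_subtractf)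
  have "sym_expressible m t (xy_power_sum m (a - c, b - c))"
  proof (cases "a \<le> b")
    case True
    then have eq: "xy_power_sum m (a - c, b - c) = (\<Sum>i<m. mpVar (i, False) ^ (b - a))"
      by (simp add: xy_power_sum_def xy_monomial_def c_def yv_def)
    show ?thesis unfolding eq by (rule sym_expressible_power_sum)
  next
    case False
    then have eq: "xy_power_sum m (a - c, b - c) = (\<Sum>i<m. mpVar (i, True) ^ (a - b))"
      by (simp add: xy_power_sum_def xy_monomial_def c_def xv_def)
    show ?thesis unfolding eq by (rule sym_expressible_power_sum)
  qed
  then show ?thesis
    by (intro sym_expressible_congruent[OF congr] sym_expressible_mult sym_expressible_const)
qed

section \<open>Orbit sums\<close>

definition injections :: "nat \<Rightarrow> nat \<Rightarrow> (nat \<Rightarrow> nat) set" where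
  "injections m k = {f. (\<forall>j<k. f j < m) \<and> inj_on f {..<k} \<and> (\<forall>j. k \<le> j \<longrightarrow> f j = j)}"

text \<open>The orbit sum of the exponent pairs v 0, ..., v (k-1): the sum over all injections f of
  \<Prod>_{j<k} x_{f j}^{a_j} y_{f j}^{b_j}.  For k = m these span the symmetric polynomials.\<close>
definition orbit_sum :: "nat \<Rightarrow> nat \<Rightarrow> (nat \<Rightarrow> nat \<times> nat) \<Rightarrow> (nat \<times> bool, 'a::comm_ring_1) mpoly" where
  "orbit_sum m k v = (\<Sum>f\<in>injections m k. \<Prod>j<k. xy_monomial (f j) (v j))"

lemma finite_injections: "finite (injections m k)"
proof (rule finite_subset)
  show "injections m k \<subseteq> (\<lambda>g j. if j < k then g j else j) ` ({..<k} \<rightarrow>\<^sub>E {..<m})"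
  proof
    fix f assume f: "f \<in> injections m k"
    then have "f = (\<lambda>j. if j < k then restrict f {..<k} j else j)"
      by (auto simp: injections_def fun_eq_iff)
    moreover have "restrict f {..<k} \<in> {..<k} \<rightarrow>\<^sub>E {..<m}"
      using f by (auto simp: injections_def)
    ultimately show "f \<in> (\<lambda>g j. if j < k then g j else j) ` ({..<k} \<rightarrow>\<^sub>E {..<m})" by blast
  qed
qed (intro finite_imageI finite_PiE; simp)

lemma injections_0: "injections m 0 = {id}"
  by (auto simp: injections_def)

lemma injections_permutations: "injections m m = {\<pi>. \<pi> permutes {..<m}}"
proof safe
  fix f assume f: "f \<in> injections m m"
  then have "f ` {..<m} = {..<m}"
    by (intro endo_inj_surj) (auto simp: injections_def)
  with f have "bij_betw f {..<m} {..<m}" by (simp add: injections_def bij_betw_def)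
  with f show "f permutes {..<m}"
    by (intro bij_imp_permutes) (auto simp: injections_def)
next
  fix \<pi> assume p: "\<pi> permutes {..<m}"
  show "\<pi> \<in> injections m m" unfolding injections_def
    using permutes_in_image[OF p] permutes_inj_on[OF p] permutes_not_in[OF p] by auto
qed

text \<open>Extending an injection on {0..<k} by a new value i \<notin> f`{0..<k} gives all injections
  on {0..<k+1}.\<close>
lemma orbit_sum_extend:
  fixes k :: nat and v :: "nat \<Rightarrow> nat \<times> nat"
  defines "pf f \<equiv> (\<Prod>j<k. xy_monomial (f j) (v j) :: (nat \<times> bool, 'a::comm_ring_1) mpoly)"
  shows "(\<Sum>f\<in>injections m k. \<Sum>i\<in>{..<m} - f ` {..<k}. pf f * xy_monomial i w) =
    orbit_sum m (Suc k) (v(k := w))"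
proof -
  have "(\<Sum>f\<in>injections m k. \<Sum>i\<in>{..<m} - f ` {..<k}. pf f * xy_monomial i w) =
      (\<Sum>(f, i)\<in>Sigma (injections m k) (\<lambda>f. {..<m} - f ` {..<k}). pf f * xy_monomial i w)"
    by (rule sum.Sigma) (auto simp: finite_injections)
  also have "\<dots> = (\<Sum>g\<in>injections m (Suc k). \<Prod>j<Suc k. xy_monomial (g j) ((v(k := w)) j))"
  proof (rule sum.reindex_bij_witness[of _ "\<lambda>g. (g(k := k), g k)" "\<lambda>(f, i). f(k := i)"])
    fix x assume "x \<in> Sigma (injections m k) (\<lambda>f. {..<m} - f ` {..<k})"
    then obtain f i where x: "x = (f, i)" "f \<in> injections m k" "i < m" "i \<notin> f ` {..<k}"
      by auto
    then have "f k = k" by (simp add: injections_def)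
    with x show "((case x of (f, i) \<Rightarrow> f(k := i))(k := k), (case x of (f, i) \<Rightarrow> f(k := i)) k) = x"
      by (auto simp: fun_eq_iff)
    have "inj_on (f(k := i)) (insert k {..<k})"
      using x by (auto simp: injections_def inj_on_def)
    with x show "(case x of (f, i) \<Rightarrow> f(k := i)) \<in> injections m (Suc k)"
      by (auto simp: injections_def lessThan_Suc less_Suc_eq)
    have "(\<Prod>j<k. xy_monomial ((f(k := i)) j) ((v(k := w)) j)) = pf f"
      unfolding pf_def by (rule prod.cong) auto
    with x show "(\<Prod>j<Suc k. xy_monomial ((case x of (f, i) \<Rightarrow> f(k := i)) j) ((v(k := w)) j)) =
        (case x of (f, i) \<Rightarrow> pf f * xy_monomial i w)"
      by simp
  next
    fix g assume g: "g \<in> injections m (Suc k)"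
    show "(case (g(k := k), g k) of (f, i) \<Rightarrow> f(k := i)) = g" by simp
    have inj: "inj_on g {..<Suc k}" and "g k < m" using g by (simp_all add: injections_def)
    moreover have "g k \<notin> g ` {..<k}"
      using inj_on_image_mem_iff[OF inj, of k "{..<k}"] by simp
    moreover have "g(k := k) \<in> injections m k"
      using g by (auto simp: injections_def inj_on_def)
    moreover have "(g(k := k)) ` {..<k} = g ` {..<k}" by auto
    ultimately show "(g(k := k), g k) \<in> Sigma (injections m k) (\<lambda>f. {..<m} - f ` {..<k})"
      by auto
  qed
  finally show ?thesis by (simp add: orbit_sum_def)
qed

text \<open>If the new index i equals some f j, the factor for j absorbs the exponent pair w.\<close>
lemma orbit_sum_absorb:
  fixes k :: nat and v :: "nat \<Rightarrow> nat \<times> nat"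
  defines "pf f \<equiv> (\<Prod>j<k. xy_monomial (f j) (v j) :: (nat \<times> bool, 'a::comm_ring_1) mpoly)"
  shows "(\<Sum>f\<in>injections m k. \<Sum>i\<in>f ` {..<k}. pf f * xy_monomial i w) =
    (\<Sum>j<k. orbit_sum m k (v(j := v j + w)))"
proof -
  have "(\<Sum>f\<in>injections m k. \<Sum>i\<in>f ` {..<k}. pf f * xy_monomial i w) =
      (\<Sum>f\<in>injections m k. \<Sum>j<k. pf f * xy_monomial (f j) w)"
  proof (rule sum.cong[OF refl])
    fix f assume "f \<in> injections m k"
    then have "inj_on f {..<k}" by (simp add: injections_def)
    then show "(\<Sum>i\<in>f ` {..<k}. pf f * xy_monomial i w) = (\<Sum>j<k. pf f * xy_monomial (f j) w)"
      by (simp add: sum.reindex)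
  qed
  also have "\<dots> = (\<Sum>j<k. \<Sum>f\<in>injections m k. pf f * xy_monomial (f j) w)"
    by (rule sum.swap)
  also have "\<dots> = (\<Sum>j<k. orbit_sum m k (v(j := v j + w)))"
    unfolding orbit_sum_def
  proof (intro sum.cong refl)
    fix j f assume "j \<in> {..<k}"
    then show "pf f * xy_monomial (f j) w = (\<Prod>j'<k. xy_monomial (f j') ((v(j := v j + w)) j'))"
      unfolding pf_def
      by (simp add: prod.remove[of "{..<k}" j] mult_ac flip: xy_monomial_mult)
  qed
  finally show ?thesis .
qed

lemma orbit_sum_times_power_sum:
  "(orbit_sum m k v * xy_power_sum m w :: (nat \<times> bool, 'a::comm_ring_1) mpoly) =
   orbit_sum m (Suc k) (v(k := w)) + (\<Sum>j<k. orbit_sum m k (v(j := v j + w)))"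
proof -
  define pf :: "(nat \<Rightarrow> nat) \<Rightarrow> (nat \<times> bool, 'a) mpoly"
    where "pf f = (\<Prod>j<k. xy_monomial (f j) (v j))" for f
  have "orbit_sum m k v * xy_power_sum m w =
      (\<Sum>f\<in>injections m k. \<Sum>i<m. pf f * xy_monomial i w)"
    by (simp add: orbit_sum_def xy_power_sum_def pf_def sum_distrib_left sum_distrib_right)
      (rule sum.swap)
  also have "\<dots> = (\<Sum>f\<in>injections m k. (\<Sum>i\<in>{..<m} - f ` {..<k}. pf f * xy_monomial i w) +
      (\<Sum>i\<in>f ` {..<k}. pf f * xy_monomial i w))"
    by (intro sum.cong refl sum.subset_diff) (auto simp: injections_def)
  also have "\<dots> = orbit_sum m (Suc k) (v(k := w)) + (\<Sum>j<k. orbit_sum m k (v(j := v j + w)))"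
    by (simp add: sum.distrib orbit_sum_extend orbit_sum_absorb pf_def)
  finally show ?thesis .
qed

lemma sym_expressible_orbit_sum: "sym_expressible m t (orbit_sum m k v)"
proof (induct k arbitrary: v)
  case 0
  show ?case
    using sym_expressible_const[of m t 1] by (simp add: orbit_sum_def injections_0)
next
  case (Suc k)
  have "orbit_sum m (Suc k) v = (orbit_sum m k v * xy_power_sum m (v k) -
      (\<Sum>j<k. orbit_sum m k (v(j := v j + v k))) :: (nat \<times> bool, 'a) mpoly)"
    using orbit_sum_times_power_sum[of m k v "v k", symmetric] by (simp add: eq_diff_eq)
  then show ?case
    using sym_expressible_xy_power_sum[of m t "fst (v k)" "snd (v k)"]
    by (simp add: sym_expressible_diff sym_expressible_mult sym_expressible_sum Suc)
qed

section \<open>Symmetrisation\<close>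

definition exponent_pairs :: "(nat \<times> bool \<Rightarrow>\<^sub>0 nat) \<Rightarrow> nat \<Rightarrow> nat \<times> nat" where
  "exponent_pairs mon i = (Poly_Mapping.lookup mon (i, True), Poly_Mapping.lookup mon (i, False))"

lemma monomial_subst_permute:
  assumes "Poly_Mapping.keys mon \<subseteq> {..<m} \<times> UNIV"
  shows "monomial_subst (\<lambda>(i, b). mpVar (\<pi> i, b)) mon =
    (\<Prod>i<m. xy_monomial (\<pi> i) (exponent_pairs mon i) :: (nat \<times> bool, 'a::comm_ring_1) mpoly)"
proof -
  have "monomial_subst (\<lambda>(i, b). mpVar (\<pi> i, b)) mon = (\<Prod>w\<in>{..<m} \<times> UNIV.
      (case w of (i, b) \<Rightarrow> mpVar (\<pi> i, b)) ^ Poly_Mapping.lookup mon w :: (nat \<times> bool, 'a) mpoly)"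
    by (rule monomial_subst_superset) (use assms in auto)
  also have "\<dots> = (\<Prod>i<m. \<Prod>b\<in>UNIV. mpVar (\<pi> i, b) ^ Poly_Mapping.lookup mon (i, b))"
    unfolding prod.cartesian_product by (rule prod.cong) auto
  also have "\<dots> = (\<Prod>i<m. xy_monomial (\<pi> i) (exponent_pairs mon i))"
    by (simp add: UNIV_bool xy_monomial_def exponent_pairs_def xv_def yv_def mult.commute)
  finally show ?thesis .
qed

text \<open>Summing a polynomial in the first m index pairs over all permutations yields a linear
  combination of orbit sums, hence an expressible polynomial.\<close>
lemma sym_expressible_symmetrisation:
  assumes "mpVars P \<subseteq> {..<m} \<times> UNIV"
  shows "sym_expressible m t (\<Sum>\<pi>\<in>{\<pi>. \<pi> permutes {..<m}}. permute_mp \<pi> P)"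
proof -
  have keys: "Poly_Mapping.keys mon \<subseteq> {..<m} \<times> UNIV" if "mon \<in> Poly_Mapping.keys P" for mon
    using assms that by (auto simp: mpVars_def)
  have "(\<Sum>\<pi>\<in>{\<pi>. \<pi> permutes {..<m}}. permute_mp \<pi> P) =
      (\<Sum>\<pi>\<in>injections m m. \<Sum>mon\<in>Poly_Mapping.keys P.
        mpConst (Poly_Mapping.lookup P mon) * (\<Prod>i<m. xy_monomial (\<pi> i) (exponent_pairs mon i)))"
    unfolding injections_permutations permute_mp_def mpSubst_def monomial_subst_def[symmetric]
    by (intro sum.cong refl) (simp add: monomial_subst_permute[OF keys])
  also have "\<dots> = (\<Sum>mon\<in>Poly_Mapping.keys P.
      mpConst (Poly_Mapping.lookup P mon) * orbit_sum m m (exponent_pairs mon))"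
    by (subst sum.swap) (simp add: orbit_sum_def sum_distrib_left)
  finally show ?thesis
    by (simp add: sym_expressible_sum sym_expressible_mult sym_expressible_const
        sym_expressible_orbit_sum)
qed

theorem lemma2p1:
  fixes m :: nat and t :: "'a::idom"
  assumes Qalg: "\<forall>n::nat. n > 0 \<longrightarrow> (\<exists>u::'a. of_nat n * u = 1)"
    and P_vars: "mpVars P \<subseteq> {..<m} \<times> UNIV"
    and P_inv: "\<forall>\<pi>. \<pi> permutes {..<m} \<longrightarrow> permute_mp \<pi> P = P"
  shows "\<exists>(Q :: (nat \<times> bool, 'a) mpoly) (h :: nat \<Rightarrow> (nat \<times> bool, 'a) mpoly).
           mpVars Q \<subseteq> {1..m} \<times> UNIV \<and>
           P - mpSubst (\<lambda>(k, b). esym m b k) Q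
             = (\<Sum>i<m. h i * (xv i * yv i - mpConst t))"
proof -
  have "(\<Sum>\<pi>\<in>{\<pi>. \<pi> permutes {..<m}}. permute_mp \<pi> P) = of_nat (fact m) * P"
    using P_inv card_permutations[of "{..<m}" m] by simp
  then have sym: "sym_expressible m t (of_nat (fact m) * P)"
    using sym_expressible_symmetrisation[OF P_vars] by simp
  obtain u :: 'a where u: "of_nat (fact m) * u = 1"
    using Qalg[rule_format, of "fact m"] by auto
  have inverse: "mpConst u * of_nat (fact m) = (1 :: (nat \<times> bool, 'a) mpoly)"
    by (metis mpConst_1 mpConst_mult mpConst_of_nat mult.commute u)
  have "mpConst u * (of_nat (fact m) * P) = P"
    by (simp add: inverse flip: mult.assoc)
  then have "sym_expressible m t P"
    using sym_expressible_mult[OF sym_expressible_const sym, of u] by simp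
  then show ?thesis
    unfolding sym_expressible_def in_node_ideal_def node_rel_def by blast
qed

end
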